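(* Let $n\ge1$, $Q$ a real symmetric positive definite $n\times n$ matrix and $B$ a real $n\times n$ matrix all of whose eigenvalues have negative real parts. There is a constant $C=C(n,Q,B)$ such that for all $(x,u)\in\mathbb R^n\times\mathbb R^n$ with $|x-u|>1/(1+|x|)$ and all $0<t\le1$, $$K_t^{UO}(x,u)\le C\,e^{-R(x)}(1+|x|)^n.$$
   Context: $Q_t=\int_0^te^{sB}Qe^{sB^*}ds$ ($t\in(0,\infty]$), $R(x)=\frac12\langle Q_\infty^{-1}x,x\rangle$, $D_t=Q_\infty e^{-tB^*}Q_\infty^{-1}$, and for $t>0$ $K_t^{UO}(x,u)=(2\pi)^{-n}(\det Q_\infty\det Q_t)^{-1/2}e^{t\,\mathrm{tr}B}e^{-R(x)}\exp[-\frac12\langle (Q_t^{-1}-Q_\infty^{-1})(x-D_tu),x-D_tu\rangle]$. *)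

theory Defs
  imports "HOL-Analysis.Analysis"
begin

fun mpow :: "real^'n^'n \<Rightarrow> nat \<Rightarrow> real^'n^'n" where
  "mpow A 0 = mat 1"
| "mpow A (Suc k) = A ** mpow A k"

definition mexp :: "real^'n^'n \<Rightarrow> real^'n^'n" where
  "mexp A = (\<Sum>k. inverse (fact k) *\<^sub>R mpow A k)"

definition complex_eigenvalue :: "real^'n^'n \<Rightarrow> complex \<Rightarrow> bool" where
  "complex_eigenvalue B z \<longleftrightarrow>
     det (mat z - (\<chi> i j. complex_of_real (B $ i $ j)) :: complex^'n^'n) = 0"

definition sym_pos_def_mat :: "real^'n^'n \<Rightarrow> bool" where
  "sym_pos_def_mat Q \<longleftrightarrow> transpose Q = Q \<and> (\<forall>x. x \<noteq> 0 \<longrightarrow> x \<bullet> (Q *v x) > 0)"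

definition Qt :: "real^'n^'n \<Rightarrow> real^'n^'n \<Rightarrow> real \<Rightarrow> real^'n^'n" where
  "Qt B Q t = integral {0..t} (\<lambda>s. mexp (s *\<^sub>R B) ** Q ** transpose (mexp (s *\<^sub>R B)))"

definition Qinf :: "real^'n^'n \<Rightarrow> real^'n^'n \<Rightarrow> real^'n^'n" where
  "Qinf B Q = integral {0..} (\<lambda>s. mexp (s *\<^sub>R B) ** Q ** transpose (mexp (s *\<^sub>R B)))"

definition Rfun :: "real^'n^'n \<Rightarrow> real^'n^'n \<Rightarrow> real^'n \<Rightarrow> real" where
  "Rfun B Q x = 1/2 * ((matrix_inv (Qinf B Q) *v x) \<bullet> x)"

definition Dt :: "real^'n^'n \<Rightarrow> real^'n^'n \<Rightarrow> real \<Rightarrow> real^'n^'n" where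
  "Dt B Q t = Qinf B Q ** mexp ((- t) *\<^sub>R transpose B) ** matrix_inv (Qinf B Q)"

definition KUO :: "real^'n^'n \<Rightarrow> real^'n^'n \<Rightarrow> real \<Rightarrow> real^'n \<Rightarrow> real^'n \<Rightarrow> real" where
  "KUO B Q t x u =
     inverse ((2 * pi) ^ CARD('n)) * inverse (sqrt (det (Qinf B Q) * det (Qt B Q t)))
     * exp (t * trace B) * exp (- Rfun B Q x)
     * exp (- 1/2 * (((matrix_inv (Qt B Q t) - matrix_inv (Qinf B Q)) *v (x - Dt B Q t *v u))
                      \<bullet> (x - Dt B Q t *v u)))"

end

theory Submission
  imports Defs
begin

text \<open>Write K_t^UO(x,u) = P_t exp (-q_t(y)/2) exp (-R x) with y = x - D_t u, the prefactor
  P_t = (2 pi)^-n (det Q_inf det Q_t)^(-1/2) e^(t tr B) and q_t(y) = <(Q_t^-1 - Q_inf^-1) y, y>.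
  For 0 < t \<le> 1 the matrix Q_t is comparable to t I, so that P_t \<le> G t^(-n/2) and
  q_t(y) \<ge> |y|^2/(M t) - Mi |y|^2 \<ge> 0, while |D_t u - u| \<le> L t |u|. If |x - u| > 1/(1+|x|),
  then either |y| \<ge> 1/(2(1+|x|)), and the Gaussian factor exp (-|y|^2/(4 M t)) absorbs t^(-n/2)
  up to (1+|x|)^n, or D_t u has moved by at least |x - u|/2, which forces
  1/t \<le> 4 L (1+|x|)^2 and bounds t^(-n/2) by (4 L)^(n/2) (1+|x|)^n directly.\<close>

section \<open>Frobenius norm and the matrix exponential\<close>

lemma norm_vec_power2: "(norm (x::'a::real_normed_vector^'n))\<^sup>2 = (\<Sum>i\<in>UNIV. (norm (x$i))\<^sup>2)"
  by (simp add: norm_vec_def L2_set_def sum_nonneg)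

lemma norm_matrix_vector_mult_le: "norm ((A::real^'n^'m) *v x) \<le> norm A * norm x"
proof -
  have "(norm (A *v x))\<^sup>2 = (\<Sum>i\<in>UNIV. (A$i \<bullet> x)\<^sup>2)"
    by (simp add: norm_vec_power2 matrix_vector_mult_def inner_vec_def mult.commute)
  also have "\<dots> \<le> (\<Sum>i\<in>UNIV. (norm (A$i))\<^sup>2 * (norm x)\<^sup>2)"
    by (intro sum_mono) (simp add: Cauchy_Schwarz_ineq power2_norm_eq_inner)
  also have "\<dots> = (norm A * norm x)\<^sup>2"
    by (simp add: norm_vec_power2[of A] sum_distrib_right power_mult_distrib)
  finally show ?thesis
    by (rule power2_le_imp_le) simp
qed

lemma norm_transpose: "norm (transpose (A::real^'n^'m)) = norm A"
proof -
  have "(norm (transpose A))\<^sup>2 = (norm A)\<^sup>2"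
    unfolding norm_vec_power2 transpose_def by (simp, rule sum.swap)
  then show ?thesis
    by (simp add: power2_eq_iff_nonneg)
qed

lemma norm_matrix_mult_le: "norm ((A::real^'n^'m) ** (B::real^'k^'n)) \<le> norm A * norm B"
proof -
  have row: "norm ((A ** B) $ i) \<le> norm (A$i) * norm B" for i
  proof -
    have "(A ** B) $ i = transpose B *v A$i"
      by (simp add: matrix_matrix_mult_def matrix_vector_mult_def transpose_def vec_eq_iff mult.commute)
    then show ?thesis
      using norm_matrix_vector_mult_le[of "transpose B" "A$i"] by (simp add: norm_transpose mult.commute)
  qed
  have "(norm (A ** B))\<^sup>2 \<le> (\<Sum>i\<in>UNIV. (norm (A$i))\<^sup>2 * (norm B)\<^sup>2)"
    unfolding norm_vec_power2[of "A ** B"] power_mult_distrib[symmetric]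
    by (intro sum_mono power_mono row) simp
  also have "\<dots> = (norm A * norm B)\<^sup>2"
    by (simp add: norm_vec_power2[of A] sum_distrib_right power_mult_distrib)
  finally show ?thesis
    by (rule power2_le_imp_le) simp
qed

lemma norm_mpow_le: "norm (mpow (A::real^'n^'n) k) \<le> norm (mat 1 :: real^'n^'n) * norm A ^ k"
proof (induction k)
  case (Suc k)
  have "norm (mpow A (Suc k)) \<le> norm A * norm (mpow A k)"
    by (simp add: norm_matrix_mult_le)
  also have "\<dots> \<le> norm A * (norm (mat 1 :: real^'n^'n) * norm A ^ k)"
    by (rule mult_left_mono[OF Suc.IH norm_ge_zero])
  finally show ?case
    by (simp add: algebra_simps)
qed simp

lemma norm_mexp_series_le:
  "norm (inverse (fact k) *\<^sub>R mpow (A::real^'n^'n) k) \<le> norm (mat 1 :: real^'n^'n) * (norm A ^ k / fact k)"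
  using divide_right_mono[OF norm_mpow_le[of A k], of "fact k"] by (simp add: divide_inverse mult.commute)

lemma summable_norm_mexp_series:
  "summable (\<lambda>k. norm (inverse (fact k) *\<^sub>R mpow (A::real^'n^'n) k))"
proof (rule summable_comparison_test')
  show "summable (\<lambda>k. norm (mat 1 :: real^'n^'n) * (norm A ^ k / fact k))"
    using exp_converges[of "norm A"] by (intro summable_mult) (simp add: sums_iff divide_inverse mult.commute)
qed (use norm_mexp_series_le in simp)

lemma norm_mexp_minus_id_le:
  "norm (mexp (A::real^'n^'n) - mat 1) \<le> norm (mat 1 :: real^'n^'n) * (exp (norm A) - 1)"
proof -
  let ?T = "\<lambda>k. inverse (fact k) *\<^sub>R mpow A k"
  let ?N = "norm (mat 1 :: real^'n^'n)"
  have tail: "mexp A - mat 1 = (\<Sum>k. ?T (Suc k))"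
    unfolding mexp_def using suminf_split_head[OF summable_norm_cancel[OF summable_norm_mexp_series[of A]]]
    by simp
  have summable_tail: "summable (\<lambda>k. norm (?T (Suc k)))"
    using summable_norm_mexp_series[of A] by (subst summable_Suc_iff)
  have exp_tail: "(\<lambda>k. ?N * (norm A ^ Suc k / fact (Suc k))) sums (?N * (exp (norm A) - 1))"
  proof -
    have "(\<lambda>k. norm A ^ k / fact k) sums exp (norm A)"
      using exp_converges[of "norm A"] by (simp add: divide_inverse mult.commute)
    then have "(\<lambda>k. norm A ^ Suc k / fact (Suc k)) sums (exp (norm A) - 1)"
      by (subst sums_Suc_iff) simp
    then show ?thesis
      by (rule sums_mult)
  qed
  have "norm (mexp A - mat 1) \<le> (\<Sum>k. norm (?T (Suc k)))"
    unfolding tail by (rule summable_norm[OF summable_tail])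
  also have "\<dots> \<le> (\<Sum>k. ?N * (norm A ^ Suc k / fact (Suc k)))"
    by (rule suminf_le[OF norm_mexp_series_le summable_tail sums_summable[OF exp_tail]])
  also have "\<dots> = ?N * (exp (norm A) - 1)"
    using exp_tail by (simp add: sums_iff)
  finally show ?thesis .
qed

lemma norm_mexp_le: "norm (mexp (A::real^'n^'n)) \<le> norm (mat 1 :: real^'n^'n) * exp (norm A)"
  using norm_triangle_ineq[of "mexp A - mat 1" "mat 1"] norm_mexp_minus_id_le[of A]
  by (simp add: algebra_simps)

lemma norm_mexp_scaleR_minus_id_le:
  assumes "0 \<le> s" "s \<le> 1"
  shows "norm (mexp (s *\<^sub>R (A::real^'n^'n)) - mat 1) \<le> norm (mat 1 :: real^'n^'n) * (exp (norm A) - 1) * s"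
proof -
  have "exp (s * norm A) \<le> (1 - s) * exp 0 + s * exp (norm A)"
    using convex_onD[OF exp_convex, of s 0 "norm A"] assms by simp
  then have "exp (norm (s *\<^sub>R A)) - 1 \<le> (exp (norm A) - 1) * s"
    using assms by (simp add: algebra_simps)
  then have "norm (mat 1 :: real^'n^'n) * (exp (norm (s *\<^sub>R A)) - 1)
      \<le> norm (mat 1 :: real^'n^'n) * ((exp (norm A) - 1) * s)"
    by (rule mult_left_mono) simp
  then show ?thesis
    using norm_mexp_minus_id_le[of "s *\<^sub>R A"] by (simp add: mult.assoc)
qed

lemma norm_mexp_scaleR_le:
  assumes "0 \<le> s" "s \<le> 1"
  shows "norm (mexp (s *\<^sub>R (A::real^'n^'n))) \<le> norm (mat 1 :: real^'n^'n) * exp (norm A)"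
proof -
  have "norm (s *\<^sub>R A) \<le> norm A"
    using assms by (simp add: mult_left_le_one_le)
  then have "norm (mat 1 :: real^'n^'n) * exp (norm (s *\<^sub>R A)) \<le> norm (mat 1 :: real^'n^'n) * exp (norm A)"
    by (intro mult_left_mono) simp_all
  with norm_mexp_le[of "s *\<^sub>R A"] show ?thesis
    by linarith
qed

lemma inner_matrix_vector_le: "x \<bullet> ((A::real^'n^'n) *v x) \<le> norm A * (norm x)\<^sup>2"
proof -
  have "x \<bullet> (A *v x) \<le> norm x * norm (A *v x)"
    by (rule norm_cauchy_schwarz)
  also have "\<dots> \<le> norm x * (norm A * norm x)"
    by (intro mult_left_mono norm_matrix_vector_mult_le) simp
  finally show ?thesis
    by (simp add: power2_eq_square algebra_simps)
qed

lemma norm_vector_matrix_ge_half: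
  assumes "norm (A - mat 1) \<le> 1/2"
  shows "norm x / 2 \<le> norm (x v* (A::real^'n^'n))"
proof -
  have "transpose (A - mat 1) = transpose A - mat 1"
    by (simp add: transpose_def mat_def vec_eq_iff)
  then have "x v* A = x + transpose (A - mat 1) *v x"
    by (simp add: matrix_vector_mult_diff_rdistrib)
  moreover have "norm (transpose (A - mat 1) *v x) \<le> norm (A - mat 1) * norm x"
    using norm_matrix_vector_mult_le[of "transpose (A - mat 1)" x] by (simp add: norm_transpose)
  moreover have "norm (A - mat 1) * norm x \<le> 1/2 * norm x"
    by (rule mult_right_mono[OF assms norm_ge_zero])
  ultimately show ?thesis
    using norm_triangle_ineq4[of "x v* A" "transpose (A - mat 1) *v x"] by simp
qed

section \<open>Positive definite matrices\<close>

lemma matrix_vector_mul_matrix_inv: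
  assumes "invertible (A::real^'n^'n)"
  shows "A *v (matrix_inv A *v y) = y"
proof -
  have "A ** matrix_inv A = mat 1"
    using assms unfolding invertible_def matrix_inv_def by (rule someI2_ex) simp
  then show ?thesis
    by (simp add: matrix_vector_mul_assoc)
qed

lemma continuous_on_det: "continuous_on S g \<Longrightarrow> continuous_on S (\<lambda>s. det (g s :: real^'n^'n))"
  unfolding det_def by (intro continuous_intros)

lemma det_scaleR: "det (c *\<^sub>R (A::real^'n^'n)) = c ^ CARD('n) * det A"
proof -
  have "c *\<^sub>R A = (\<chi> i. c *s (A$i))"
    by (simp add: vec_eq_iff)
  then show ?thesis
    using det_rows_mul[of "\<lambda>i. c" "\<lambda>i. A$i"] by simp
qed

lemma bounded_linear_quadratic_form: "bounded_linear (\<lambda>A::real^'n^'n. x \<bullet> (A *v x))"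
  unfolding linear_conv_bounded_linear[symmetric]
  by (rule linearI)
    (simp_all add: matrix_vector_mult_add_rdistrib inner_add_right scaleR_matrix_vector_assoc[symmetric])

lemma pos_def_det_nonzero:
  assumes "\<And>x. x \<noteq> 0 \<Longrightarrow> 0 < x \<bullet> ((A::real^'n^'n) *v x)"
  shows "det A \<noteq> 0"
proof -
  have "inj ((*v) A)"
  proof (rule injI)
    fix x y
    assume "A *v x = A *v y"
    then have "A *v (x - y) = 0"
      by (simp add: matrix_vector_mult_diff_distrib)
    then show "x = y"
      using assms[of "x - y"] by auto
  qed
  then show ?thesis
    using det_nz_iff_inj[of "(*v) A"] by simp
qed

lemma pos_def_invertible:
  "(\<And>x. x \<noteq> 0 \<Longrightarrow> 0 < x \<bullet> ((A::real^'n^'n) *v x)) \<Longrightarrow> invertible A"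
  using pos_def_det_nonzero invertible_det_nz by blast

text \<open>The segment from the identity to a positive definite matrix stays positive definite, so
  the determinant, which is continuous and never vanishes on it, keeps the sign of det 1.\<close>
lemma pos_def_det_pos:
  assumes pd: "\<And>x. x \<noteq> 0 \<Longrightarrow> 0 < x \<bullet> ((A::real^'n^'n) *v x)"
  shows "0 < det A"
proof (rule ccontr)
  assume "\<not> 0 < det A"
  define h where "h s = det (s *\<^sub>R A + (1 - s) *\<^sub>R mat 1)" for s :: real
  have "continuous_on {0..1} h"
    unfolding h_def by (intro continuous_on_det continuous_intros)
  moreover have "h 1 \<le> 0" "0 \<le> h 0"
    using \<open>\<not> 0 < det A\<close> by (auto simp: h_def)
  ultimately obtain s where s: "0 \<le> s" "s \<le> 1" "h s = 0"
    using IVT2'[of h 1 0 0] by auto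
  have "0 < x \<bullet> ((s *\<^sub>R A + (1 - s) *\<^sub>R mat 1) *v x)" if "x \<noteq> 0" for x
  proof -
    have "x \<bullet> ((s *\<^sub>R A + (1 - s) *\<^sub>R mat 1) *v x) = s * (x \<bullet> (A *v x)) + (1 - s) * (x \<bullet> x)"
      by (simp add: matrix_vector_mult_add_rdistrib scaleR_matrix_vector_assoc[symmetric] inner_add_right)
    moreover have "0 < x \<bullet> (A *v x)" "0 < x \<bullet> x"
      using pd that by auto
    ultimately show ?thesis
      using s(1,2) by (cases "s = 0") (auto intro: add_pos_nonneg add_nonneg_pos)
  qed
  then show False
    using pos_def_det_nonzero s(3) by (auto simp: h_def)
qed

lemma pos_def_coercive:
  assumes pd: "\<And>x. x \<noteq> 0 \<Longrightarrow> 0 < x \<bullet> ((A::real^'n^'n) *v x)"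
  obtains c where "0 < c" "\<And>x. c * (norm x)\<^sup>2 \<le> x \<bullet> (A *v x)"
proof -
  have cont: "continuous_on (sphere (0::real^'n) 1) (\<lambda>x. x \<bullet> (A *v x))"
    by (intro continuous_intros continuous_on_id
        bounded_linear.continuous_on[OF matrix_vector_mul_bounded_linear])
  obtain u where u: "u \<in> sphere 0 1" "\<And>y. y \<in> sphere 0 1 \<Longrightarrow> u \<bullet> (A *v u) \<le> y \<bullet> (A *v y)"
    using continuous_attains_inf[OF compact_sphere _ cont] by auto
  show ?thesis
  proof
    have "u \<noteq> 0"
      using u(1) by auto
    then show "0 < u \<bullet> (A *v u)"
      by (rule pd)
    fix x :: "real^'n"
    show "(u \<bullet> (A *v u)) * (norm x)\<^sup>2 \<le> x \<bullet> (A *v x)"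
    proof (cases "x = 0")
      case False
      have "u \<bullet> (A *v u) \<le> ((1 / norm x) *\<^sub>R x) \<bullet> (A *v ((1 / norm x) *\<^sub>R x))"
        using False by (intro u(2)) simp
      also have "\<dots> = (x \<bullet> (A *v x)) / (norm x)\<^sup>2"
        by (simp add: matrix_vector_mult_scaleR power2_eq_square)
      finally show ?thesis
        using False by (simp add: pos_le_divide_eq)
    qed simp
  qed
qed

text \<open>Uniform positivity and boundedness make the admissible matrices a compact set of positive
  definite matrices, on which the continuous function det attains a positive minimum.\<close>
lemma det_lower_bound_coercive:
  assumes "0 < c"
  obtains m where "0 < m"
    "\<And>A::real^'n^'n. norm A \<le> M \<Longrightarrow> (\<And>x. c * (norm x)\<^sup>2 \<le> x \<bullet> (A *v x)) \<Longrightarrow> m \<le> det A"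
proof -
  define S where "S = cball (0::real^'n^'n) M \<inter> (\<Inter>x. {A. c * (norm x)\<^sup>2 \<le> x \<bullet> (A *v x)})"
  have "closed (\<Inter>x. {A::real^'n^'n. c * (norm x)\<^sup>2 \<le> x \<bullet> (A *v x)})"
    by (intro closed_INT ballI closed_Collect_le continuous_intros
        bounded_linear.continuous_on[OF bounded_linear_quadratic_form])
  then have "compact S"
    unfolding S_def by (rule compact_Int_closed[OF compact_cball])
  show ?thesis
  proof (cases "S = {}")
    case True
    show ?thesis
      by (rule that[of 1]) (use True in \<open>auto simp: S_def\<close>)
  next
    case False
    obtain A0 where A0: "A0 \<in> S" "\<And>A. A \<in> S \<Longrightarrow> det A0 \<le> det A"
      using continuous_attains_inf[OF \<open>compact S\<close> False continuous_on_det[OF continuous_on_id]] by auto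
    have "0 < x \<bullet> (A0 *v x)" if "x \<noteq> 0" for x
    proof -
      have "0 < c * (norm x)\<^sup>2"
        using that assms by simp
      also have "\<dots> \<le> x \<bullet> (A0 *v x)"
        using A0(1) by (auto simp: S_def)
      finally show ?thesis .
    qed
    then have "0 < det A0"
      by (rule pos_def_det_pos)
    then show ?thesis
      using A0(2) unfolding S_def by (intro that[of "det A0"]) auto
  qed
qed

text \<open>The variational formula: y \<bullet> A^-1 y is the maximum of 2 z \<bullet> y - z \<bullet> A z over z,
  attained at z = A^-1 y.\<close>
lemma quadratic_form_matrix_inv_ge:
  fixes A :: "real^'n^'n"
  assumes sym: "transpose A = A" and inv: "invertible A" and psd: "\<And>z. 0 \<le> z \<bullet> (A *v z)"
  shows "2 * (z \<bullet> y) - z \<bullet> (A *v z) \<le> y \<bullet> (matrix_inv A *v y)"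
proof -
  define w where "w = matrix_inv A *v y"
  have Aw: "A *v w = y"
    unfolding w_def by (rule matrix_vector_mul_matrix_inv[OF inv])
  have "w v* A = A *v w"
    by (metis sym vector_transpose_matrix)
  then have "w \<bullet> (A *v z) = z \<bullet> (A *v w)"
    by (metis dot_lmul_matrix inner_commute)
  moreover have "0 \<le> (z - w) \<bullet> (A *v (z - w))"
    by (rule psd)
  ultimately have "0 \<le> z \<bullet> (A *v z) - 2 * (z \<bullet> y) + w \<bullet> y"
    using Aw by (simp add: matrix_vector_mult_diff_distrib inner_diff_left inner_diff_right)
  then show ?thesis
    by (simp add: w_def inner_commute)
qed

lemma quadratic_form_matrix_inv_antimono:
  fixes A B :: "real^'n^'n"
  assumes "transpose A = A" "invertible A" "\<And>z. 0 \<le> z \<bullet> (A *v z)"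
    and "invertible B" and le: "\<And>z. z \<bullet> (A *v z) \<le> z \<bullet> (B *v z)"
  shows "y \<bullet> (matrix_inv B *v y) \<le> y \<bullet> (matrix_inv A *v y)"
proof -
  define w where "w = matrix_inv B *v y"
  have "B *v w = y"
    unfolding w_def by (rule matrix_vector_mul_matrix_inv[OF \<open>invertible B\<close>])
  then have "y \<bullet> (matrix_inv B *v y) = 2 * (w \<bullet> y) - w \<bullet> (B *v w)"
    by (simp add: w_def inner_commute)
  also have "\<dots> \<le> 2 * (w \<bullet> y) - w \<bullet> (A *v w)"
    using le[of w] by simp
  also have "\<dots> \<le> y \<bullet> (matrix_inv A *v y)"
    by (rule quadratic_form_matrix_inv_ge) fact+
  finally show ?thesis .
qed

lemma quadratic_form_matrix_inv_lower_bound: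
  fixes A :: "real^'n^'n"
  assumes "transpose A = A" "invertible A" "\<And>z. 0 \<le> z \<bullet> (A *v z)"
    and "0 < k" and up: "\<And>z. z \<bullet> (A *v z) \<le> k * (norm z)\<^sup>2"
  shows "(norm y)\<^sup>2 / k \<le> y \<bullet> (matrix_inv A *v y)"
proof -
  let ?z = "(1 / k) *\<^sub>R y"
  have "?z \<bullet> (A *v ?z) \<le> (norm y)\<^sup>2 / k"
    using up[of ?z] \<open>0 < k\<close> by (simp add: power2_eq_square)
  moreover have "2 * (?z \<bullet> y) = 2 * (norm y)\<^sup>2 / k"
    by (simp add: power2_norm_eq_inner)
  ultimately have "(norm y)\<^sup>2 / k \<le> 2 * (?z \<bullet> y) - ?z \<bullet> (A *v ?z)"
    by linarith
  also have "\<dots> \<le> y \<bullet> (matrix_inv A *v y)"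
    by (rule quadratic_form_matrix_inv_ge) fact+
  finally show ?thesis .
qed

section \<open>Integrals of matrix-valued functions\<close>

lemma has_integral_transpose:
  fixes f :: "'a::euclidean_space \<Rightarrow> real^'n^'m"
  assumes "(f has_integral I) S"
  shows "((\<lambda>s. transpose (f s)) has_integral transpose I) S"
proof -
  have "bounded_linear (transpose :: real^'n^'m \<Rightarrow> real^'m^'n)"
    unfolding linear_conv_bounded_linear[symmetric]
    by (rule linearI) (simp_all add: transpose_def vec_eq_iff)
  from has_integral_linear[OF assms this] show ?thesis
    by (simp add: o_def)
qed

lemma has_integral_symmetric_matrix:
  fixes f :: "'a::euclidean_space \<Rightarrow> real^'n^'n"
  assumes "(f has_integral I) S" "\<And>s. transpose (f s) = f s"
  shows "transpose I = I"
  using has_integral_transpose[OF assms(1)] assms by (simp add: has_integral_unique)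

lemma has_integral_quadratic_form:
  fixes f :: "'a::euclidean_space \<Rightarrow> real^'n^'n"
  assumes "(f has_integral I) S"
  shows "((\<lambda>s. x \<bullet> (f s *v x)) has_integral x \<bullet> (I *v x)) S"
  using has_integral_linear[OF assms bounded_linear_quadratic_form[of x]] by (simp add: o_def)

section \<open>Scalar estimates\<close>

lemma power_divide_fact_le_exp: "0 \<le> (x::real) \<Longrightarrow> x ^ n / fact n \<le> exp x"
proof -
  assume "0 \<le> x"
  have sums: "(\<lambda>k. x ^ k / fact k) sums exp x"
    using exp_converges[of x] by (simp add: divide_inverse mult.commute)
  have "(\<Sum>k\<in>{n}. x ^ k / fact k) \<le> (\<Sum>k. x ^ k / fact k)"
    by (rule sum_le_suminf) (use sums \<open>0 \<le> x\<close> in \<open>auto simp: sums_iff\<close>)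
  then show ?thesis
    using sums by (simp add: sums_iff)
qed

lemma sqrt_power_exp_bounded:
  assumes "0 < b"
  obtains K where "0 \<le> K" "\<And>s. 0 < s \<Longrightarrow> sqrt (s ^ n) * exp (- (b * s)) \<le> K"
proof
  show "0 \<le> 1 + fact n / b ^ n"
    using assms by (simp add: add_nonneg_nonneg)
  fix s :: real
  assume "0 < s"
  have "exp (- (b * s)) \<le> 1"
    using assms \<open>0 < s\<close> by simp
  have sqrt_le: "sqrt (s ^ n) \<le> 1 + s ^ n"
  proof (cases "s ^ n \<le> 1")
    case False
    then have "sqrt (s ^ n) * 1 \<le> sqrt (s ^ n) * sqrt (s ^ n)"
      by (intro mult_left_mono) auto
    then show ?thesis
      using \<open>0 < s\<close> by simp
  next
    case True
    then have "sqrt (s ^ n) \<le> 1"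
      by simp
    moreover have "0 \<le> s ^ n"
      using \<open>0 < s\<close> by simp
    ultimately show ?thesis
      by linarith
  qed
  have "s ^ n * exp (- (b * s)) \<le> fact n / b ^ n"
  proof -
    have "(b * s) ^ n / fact n \<le> exp (b * s)"
      using assms \<open>0 < s\<close> by (intro power_divide_fact_le_exp) simp
    then show ?thesis
      using assms by (simp add: power_mult_distrib exp_minus field_simps)
  qed
  with \<open>exp (- (b * s)) \<le> 1\<close> have "exp (- (b * s)) + s ^ n * exp (- (b * s)) \<le> 1 + fact n / b ^ n"
    by (rule add_mono)
  moreover have "sqrt (s ^ n) * exp (- (b * s)) \<le> (1 + s ^ n) * exp (- (b * s))"
    by (rule mult_right_mono[OF sqrt_le]) simp
  ultimately show "sqrt (s ^ n) * exp (- (b * s)) \<le> 1 + fact n / b ^ n"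
    by (simp add: distrib_right)
qed

lemma sqrt_power_mult_square: "0 \<le> A \<Longrightarrow> sqrt ((a * A\<^sup>2) ^ n) = sqrt (a ^ n) * A ^ n"
proof -
  assume "0 \<le> A"
  have "(a * A\<^sup>2) ^ n = a ^ n * (A ^ n)\<^sup>2"
    by (metis power_mult power_mult_distrib mult.commute)
  then show ?thesis
    using \<open>0 \<le> A\<close> by (simp add: real_sqrt_mult)
qed

text \<open>Once t is below 1/(2 M (Mi + 1)), the term - Mi |y|^2 costs at most half of the Gaussian
  exponent |y|^2/(M t).\<close>
lemma exponent_lower_bound_small_time:
  fixes M Mi t A Y q :: real
  assumes "0 < M" "0 \<le> Mi" "0 < t" "t < 1 / (2 * M * (Mi + 1))" "1 \<le> A" "1 / (2 * A) \<le> Y"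
    and q: "Y\<^sup>2 / (M * t) - Mi * Y\<^sup>2 \<le> q"
  shows "1 / (16 * M) * (1 / (t * A\<^sup>2)) \<le> q / 2"
proof -
  have "0 < M * t"
    using assms by simp
  have "t * (2 * M * (Mi + 1)) < 1"
    using assms(1,2,4) by (simp add: pos_less_divide_eq)
  with \<open>0 < M * t\<close> have "Mi * (2 * (M * t)) \<le> 1"
    by (simp add: algebra_simps)
  then have "Mi * Y\<^sup>2 \<le> (1 / (2 * (M * t))) * Y\<^sup>2"
    using \<open>0 < M * t\<close> by (intro mult_right_mono) (simp_all add: pos_le_divide_eq)
  moreover have "Y\<^sup>2 / (M * t) = 2 * (Y\<^sup>2 / (2 * (M * t)))"
    by simp
  ultimately have "Y\<^sup>2 / (2 * (M * t)) \<le> q"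
    using q by simp
  moreover have "(1 / (2 * A))\<^sup>2 \<le> Y\<^sup>2"
    using assms(5,6) by (intro power_mono) auto
  then have "(1 / (2 * A))\<^sup>2 / (2 * (M * t)) \<le> Y\<^sup>2 / (2 * (M * t))"
    using \<open>0 < M * t\<close> by (intro divide_right_mono) auto
  moreover have "(1 / (2 * A))\<^sup>2 / (2 * (M * t)) = 2 * (1 / (16 * M) * (1 / (t * A\<^sup>2)))"
    using assms by (simp add: field_simps power2_eq_square)
  ultimately show ?thesis
    by linarith
qed

lemma sqrt_power_inverse_le:
  assumes "0 < t" "0 \<le> A" "1 / t \<le> a * A\<^sup>2"
  shows "sqrt ((1/t) ^ n) \<le> sqrt (a ^ n) * A ^ n"
proof -
  have "sqrt ((1/t) ^ n) \<le> sqrt ((a * A\<^sup>2) ^ n)"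
    using assms by (simp add: power_mono)
  then show ?thesis
    using sqrt_power_mult_square[OF assms(2)] by simp
qed

lemma gaussian_small_time_le:
  assumes "0 < t" "1 \<le> A" "b * (1 / (t * A\<^sup>2)) \<le> q / 2"
    and K: "\<And>s. 0 < s \<Longrightarrow> sqrt (s ^ n) * exp (- (b * s)) \<le> K"
  shows "sqrt ((1/t) ^ n) * exp (- q / 2) \<le> K * A ^ n"
proof -
  define s where "s = 1 / (t * A\<^sup>2)"
  have "0 < s" "1 / t = s * A\<^sup>2"
    using assms by (simp_all add: s_def)
  then have "sqrt ((1/t) ^ n) * exp (- q / 2) = (sqrt (s ^ n) * exp (- q / 2)) * A ^ n"
    using sqrt_power_mult_square[of A s n] assms(2) by simp
  also have "\<dots> \<le> (sqrt (s ^ n) * exp (- (b * s))) * A ^ n"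
    using assms(2,3) \<open>0 < s\<close> by (intro mult_right_mono mult_left_mono) (auto simp: s_def)
  also have "\<dots> \<le> K * A ^ n"
    using K[OF \<open>0 < s\<close>] assms(2) by (simp add: mult_right_mono)
  finally show ?thesis .
qed

text \<open>The prefactor t^(-n/2) against the Gaussian exp (-|y|^2/(4 M t)): for t bounded below,
  or for 1/t \<le> 4 L A^2, the prefactor alone is O(A^n); otherwise |y| \<ge> 1/(2A) and the
  Gaussian absorbs it.\<close>
lemma gaussian_factor_bound:
  fixes M Mi L :: real
  assumes "0 < M" "0 \<le> Mi" "0 \<le> L"
  obtains C where "\<And>t A Y q. 0 < t \<Longrightarrow> t \<le> 1 \<Longrightarrow> 1 \<le> A \<Longrightarrow> 1 / (2 * A) \<le> Y \<or> 1 / t \<le> 4 * L * A\<^sup>2 \<Longrightarrow>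
      0 \<le> q \<Longrightarrow> Y\<^sup>2 / (M * t) - Mi * Y\<^sup>2 \<le> q \<Longrightarrow> sqrt ((1/t) ^ n) * exp (- q / 2) \<le> C * A ^ n"
proof -
  define b where "b = 1 / (16 * M)"
  have "0 < b"
    using assms by (simp add: b_def)
  obtain K where "0 \<le> K" and K: "\<And>s. 0 < s \<Longrightarrow> sqrt (s ^ n) * exp (- (b * s)) \<le> K"
    using sqrt_power_exp_bounded[OF \<open>0 < b\<close>] by blast
  define t1 where "t1 = 1 / (2 * M * (Mi + 1))"
  have "0 < t1"
    using assms by (simp add: t1_def)
  define C where "C = sqrt ((1/t1) ^ n) + K + sqrt ((4 * L) ^ n)"
  show ?thesis
  proof (rule that[of C])
    fix t A Y q :: real
    assume t: "0 < t" "t \<le> 1" and A: "1 \<le> A" and alt: "1 / (2 * A) \<le> Y \<or> 1 / t \<le> 4 * L * A\<^sup>2"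
      and q: "0 \<le> q" "Y\<^sup>2 / (M * t) - Mi * Y\<^sup>2 \<le> q"
    have exp_le: "sqrt ((1/t) ^ n) * exp (- q / 2) \<le> sqrt ((1/t) ^ n)"
      using q t by (intro mult_left_le) auto
    have "0 \<le> sqrt ((1/t1) ^ n)" "0 \<le> sqrt ((4 * L) ^ n)"
      using \<open>0 < t1\<close> assms by auto
    then have C: "sqrt ((1/t1) ^ n) * A ^ n \<le> C * A ^ n" "K * A ^ n \<le> C * A ^ n"
        "sqrt ((4 * L) ^ n) * A ^ n \<le> C * A ^ n"
      using \<open>0 \<le> K\<close> A unfolding C_def by (auto intro!: mult_right_mono)
    consider "t1 \<le> t" | "1 / t \<le> 4 * L * A\<^sup>2" | "t < t1" "1 / (2 * A) \<le> Y"
      using alt by linarith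
    then show "sqrt ((1/t) ^ n) * exp (- q / 2) \<le> C * A ^ n"
    proof cases
      case 1
      have "1 / t \<le> 1 / t1"
        using 1 \<open>0 < t1\<close> by (simp add: frac_le)
      also have "\<dots> \<le> 1 / t1 * A\<^sup>2"
        using mult_left_mono[of 1 "A\<^sup>2" "1 / t1"] A \<open>0 < t1\<close> by (simp add: one_le_power)
      finally have "sqrt ((1/t) ^ n) \<le> sqrt ((1/t1) ^ n) * A ^ n"
        using t A by (intro sqrt_power_inverse_le) auto
      with exp_le C(1) show ?thesis
        by linarith
    next
      case 2
      then have "sqrt ((1/t) ^ n) \<le> sqrt ((4 * L) ^ n) * A ^ n"
        using t A by (intro sqrt_power_inverse_le) auto
      with exp_le C(3) show ?thesis
        by linarith
    next
      case 3
      then have "b * (1 / (t * A\<^sup>2)) \<le> q / 2"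
        unfolding b_def t1_def using assms t A q by (intro exponent_lower_bound_small_time) auto
      then have "sqrt ((1/t) ^ n) * exp (- q / 2) \<le> K * A ^ n"
        using t A K by (intro gaussian_small_time_le)
      with C(2) show ?thesis
        by linarith
    qed
  qed
qed

lemma large_displacement_time_bound:
  fixes p d X :: real
  assumes "0 \<le> p" "0 \<le> X" and d: "1 / (1 + X) < d" and dX: "d < 2 * p * (X + d)"
  shows "1 \<le> 4 * p * (1 + X)\<^sup>2"
proof (cases "1 < 4 * p")
  case True
  have "4 * p * 1 \<le> 4 * p * (1 + X)\<^sup>2"
    using assms True by (intro mult_left_mono) (auto simp: one_le_power)
  with True show ?thesis
    by linarith
next
  case False
  have "0 < 1 / (1 + X)"
    using assms by simp
  with d have "0 < d"
    by linarith
  with False have "2 * p * (X + d) \<le> 1/2 * (X + d)"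
    using assms by (intro mult_right_mono) auto
  with dX have "d < 1/2 * (X + d)"
    by (rule less_le_trans)
  then have "d < X"
    by (simp add: field_simps)
  then have "2 * p * (X + d) \<le> 2 * p * (2 * (1 + X))"
    using assms by (intro mult_left_mono) auto
  also have "\<dots> = 4 * p * (1 + X)"
    by simp
  finally have "d < 4 * p * (1 + X)"
    by (rule less_le_trans[OF dX])
  with d have "1 / (1 + X) < 4 * p * (1 + X)"
    by linarith
  then show ?thesis
    using assms by (simp add: field_simps power2_eq_square)
qed

text \<open>Here v stands for D_t u: either it stays close to u, so that x - v keeps half of the
  distance |x - u| > 1/(1+|x|), or |v - u| \<ge> |x - u|/2, which forces t of order at least
  (1+|x|)^-2.\<close>
lemma displacement_dichotomy:
  fixes x u v :: "'a::real_normed_vector"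
  assumes "0 < t" "0 \<le> L" and v: "norm (v - u) \<le> L * t * norm u"
    and far: "1 / (1 + norm x) < norm (x - u)"
  shows "1 / (2 * (1 + norm x)) \<le> norm (x - v) \<or> 1 / t \<le> 4 * L * (1 + norm x)\<^sup>2"
proof -
  define d p where "d = norm (x - u)" and "p = L * t"
  have "0 \<le> p"
    using assms by (simp add: p_def)
  have y: "d - p * norm u \<le> norm (x - v)"
    using norm_triangle_ineq[of "x - v" "v - u"] v by (simp add: d_def p_def)
  have u: "norm u \<le> norm x + d"
    using norm_triangle_ineq4[of x "x - u"] by (simp add: d_def)
  consider "p * norm u \<le> d / 2" | "d / 2 < p * norm u"
    by linarith
  then show ?thesis
  proof cases
    case 1
    define a where "a = 1 / (1 + norm x)"
    have "1 / (2 * (1 + norm x)) = a / 2" "a < d"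
      using far by (simp_all add: a_def d_def)
    with 1 y have "1 / (2 * (1 + norm x)) \<le> norm (x - v)"
      by linarith
    then show ?thesis ..
  next
    case 2
    have "p * norm u \<le> p * (norm x + d)"
      using u \<open>0 \<le> p\<close> by (rule mult_left_mono)
    with 2 have "d < 2 * p * (norm x + d)"
      by linarith
    with far have "1 \<le> 4 * p * (1 + norm x)\<^sup>2"
      using \<open>0 \<le> p\<close> by (intro large_displacement_time_bound) (simp_all add: d_def)
    then show ?thesis
      using \<open>0 < t\<close> by (simp add: p_def field_simps)
  qed
qed

section \<open>The covariance matrices Q_t\<close>

definition Q_integrand :: "real^'n^'n \<Rightarrow> real^'n^'n \<Rightarrow> real \<Rightarrow> real^'n^'n" where
  "Q_integrand B Q s = mexp (s *\<^sub>R B) ** Q ** transpose (mexp (s *\<^sub>R B))"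

lemma Qt_eq_integral: "Qt B Q t = integral {0..t} (Q_integrand B Q)"
  by (simp add: Qt_def Q_integrand_def[abs_def])

lemma Qinf_eq_integral: "Qinf B Q = integral {0..} (Q_integrand B Q)"
  by (simp add: Qinf_def Q_integrand_def[abs_def])

lemma transpose_Q_integrand: "transpose Q = Q \<Longrightarrow> transpose (Q_integrand B Q s) = Q_integrand B Q s"
  by (simp add: Q_integrand_def matrix_transpose_mul matrix_mul_assoc)

lemma inner_Q_integrand:
  "x \<bullet> (Q_integrand B Q s *v x) = (x v* mexp (s *\<^sub>R B)) \<bullet> (Q *v (x v* mexp (s *\<^sub>R B)))"
proof -
  have "Q_integrand B Q s *v x = mexp (s *\<^sub>R B) *v (Q *v (x v* mexp (s *\<^sub>R B)))"
    by (simp add: Q_integrand_def matrix_vector_mul_assoc[symmetric])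
  then show ?thesis
    by (metis dot_lmul_matrix)
qed

lemma norm_Q_integrand_le:
  assumes "0 \<le> s" "s \<le> 1"
  shows "norm (Q_integrand B Q s) \<le> (norm (mat 1 :: real^'n^'n) * exp (norm B))\<^sup>2 * norm (Q::real^'n^'n)"
proof -
  let ?M = "mexp (s *\<^sub>R B)" and ?K = "norm (mat 1 :: real^'n^'n) * exp (norm B)"
  have "norm (Q_integrand B Q s) \<le> norm (?M ** Q) * norm (transpose ?M)"
    unfolding Q_integrand_def by (rule norm_matrix_mult_le)
  also have "\<dots> \<le> norm ?M * norm Q * norm ?M"
    by (simp add: norm_transpose mult_right_mono norm_matrix_mult_le)
  also have "\<dots> \<le> ?K * norm Q * ?K"
    using norm_mexp_scaleR_le[OF assms, of B] by (intro mult_mono) (auto intro: mult_right_mono)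
  finally show ?thesis
    by (simp add: power2_eq_square algebra_simps)
qed

text \<open>For small s, |e^(sB) - I| \<le> 1/2, hence |e^(sB*) x| \<ge> |x|/2.\<close>
lemma Q_integrand_coercive_near_0:
  fixes B Q :: "real^'n^'n"
  assumes "0 \<le> c" and Q: "\<And>v. c * (norm v)\<^sup>2 \<le> v \<bullet> (Q *v v)"
  obtains s0 where "0 < s0" "s0 \<le> 1"
    "\<And>s x. 0 \<le> s \<Longrightarrow> s \<le> s0 \<Longrightarrow> c / 4 * (norm x)\<^sup>2 \<le> x \<bullet> (Q_integrand B Q s *v x)"
proof
  define K where "K = norm (mat 1 :: real^'n^'n) * (exp (norm B) - 1)"
  have "0 \<le> K"
    by (simp add: K_def)
  show "0 < min 1 (1 / (2 * (K + 1)))" "min 1 (1 / (2 * (K + 1))) \<le> 1"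
    using \<open>0 \<le> K\<close> by auto
  fix s and x :: "real^'n"
  assume s: "0 \<le> s" "s \<le> min 1 (1 / (2 * (K + 1)))"
  have "norm (mexp (s *\<^sub>R B) - mat 1) \<le> K * s"
    using norm_mexp_scaleR_minus_id_le[of s B] s by (simp add: K_def)
  also have "\<dots> \<le> (K + 1) * (1 / (2 * (K + 1)))"
    using s \<open>0 \<le> K\<close> by (intro mult_mono) auto
  also have "\<dots> = 1/2"
    using \<open>0 \<le> K\<close> by simp
  finally have "norm x / 2 \<le> norm (x v* mexp (s *\<^sub>R B))"
    by (rule norm_vector_matrix_ge_half)
  then have "(norm x / 2)\<^sup>2 \<le> (norm (x v* mexp (s *\<^sub>R B)))\<^sup>2"
    by (rule power_mono) simp
  then have "c * (norm x / 2)\<^sup>2 \<le> c * (norm (x v* mexp (s *\<^sub>R B)))\<^sup>2"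
    by (rule mult_left_mono) fact
  then have "c / 4 * (norm x)\<^sup>2 \<le> c * (norm (x v* mexp (s *\<^sub>R B)))\<^sup>2"
    by (simp add: power_divide)
  also have "\<dots> \<le> x \<bullet> (Q_integrand B Q s *v x)"
    unfolding inner_Q_integrand by (rule Q)
  finally show "c / 4 * (norm x)\<^sup>2 \<le> x \<bullet> (Q_integrand B Q s *v x)" .
qed

context
  fixes B Q :: "real^'n^'n"
  assumes integrable: "Q_integrand B Q integrable_on {0..}"
begin

lemma Qt_has_integral: "(Q_integrand B Q has_integral Qt B Q t) {0..t}"
  unfolding Qt_eq_integral
  by (rule integrable_integral, rule integrable_on_subinterval[OF integrable]) auto

lemma Qinf_has_integral: "(Q_integrand B Q has_integral Qinf B Q) {0..}"
  unfolding Qinf_eq_integral by (rule integrable_integral[OF integrable])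

lemma symmetric_Qt: "transpose Q = Q \<Longrightarrow> transpose (Qt B Q t) = Qt B Q t"
  by (rule has_integral_symmetric_matrix[OF Qt_has_integral transpose_Q_integrand])

lemma inner_Qt_mono:
  assumes "\<And>v. 0 \<le> v \<bullet> (Q *v v)" "r \<le> t"
  shows "x \<bullet> (Qt B Q r *v x) \<le> x \<bullet> (Qt B Q t *v x)"
  using assms
  by (intro has_integral_subset_le[OF _ has_integral_quadratic_form[OF Qt_has_integral]
        has_integral_quadratic_form[OF Qt_has_integral]]) (auto simp: inner_Q_integrand)

lemma inner_Qt_le_Qinf:
  assumes "\<And>v. 0 \<le> v \<bullet> (Q *v v)"
  shows "x \<bullet> (Qt B Q t *v x) \<le> x \<bullet> (Qinf B Q *v x)"
  using assms
  by (intro has_integral_subset_le[OF _ has_integral_quadratic_form[OF Qt_has_integral]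
        has_integral_quadratic_form[OF Qinf_has_integral]]) (auto simp: inner_Q_integrand)

lemma norm_Qt_le:
  obtains M where "0 < M" "\<And>t. 0 \<le> t \<Longrightarrow> t \<le> 1 \<Longrightarrow> norm (Qt B Q t) \<le> M * t"
proof
  let ?M = "(norm (mat 1 :: real^'n^'n) * exp (norm B))\<^sup>2 * norm Q + 1"
  show "0 < ?M"
    by (simp add: add_nonneg_pos)
  fix t :: real
  assume "0 \<le> t" "t \<le> 1"
  have "norm (Q_integrand B Q s) \<le> ?M" if "s \<in> {0..t} - {}" for s
    using norm_Q_integrand_le[of s B Q] that \<open>t \<le> 1\<close> by simp
  from has_integral_bound_real[OF _ finite.emptyI Qt_has_integral[of t] this] \<open>0 \<le> t\<close>
  show "norm (Qt B Q t) \<le> ?M * t"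
    by (simp add: add_nonneg_nonneg content_real)
qed

lemma Qt_coercive:
  assumes "0 < c" "\<And>v. c * (norm v)\<^sup>2 \<le> v \<bullet> (Q *v v)"
  obtains c' where "0 < c'" "\<And>t x. 0 < t \<Longrightarrow> t \<le> 1 \<Longrightarrow> c' * t * (norm x)\<^sup>2 \<le> x \<bullet> (Qt B Q t *v x)"
proof -
  have psd: "0 \<le> v \<bullet> (Q *v v)" for v
    by (rule order_trans[OF _ assms(2)]) (use assms(1) in simp)
  obtain s0 where s0: "0 < s0" "s0 \<le> 1"
    and near_0: "\<And>s x. 0 \<le> s \<Longrightarrow> s \<le> s0 \<Longrightarrow> c / 4 * (norm x)\<^sup>2 \<le> x \<bullet> (Q_integrand B Q s *v x)"
    using Q_integrand_coercive_near_0[of c Q B] assms by auto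
  show ?thesis
  proof
    show "0 < s0 * (c / 4)"
      using s0 assms by simp
    fix t :: real and x :: "real^'n"
    assume t: "0 < t" "t \<le> 1"
    define r where "r = min t s0"
    have r: "0 \<le> r" "r \<le> t" "r \<le> s0" "s0 * t \<le> r"
      using t s0 by (auto simp: r_def mult_left_le mult_left_le_one_le)
    have "s0 * (c / 4) * t * (norm x)\<^sup>2 \<le> r * (c / 4 * (norm x)\<^sup>2)"
      using mult_right_mono[OF r(4), of "c / 4 * (norm x)\<^sup>2"] assms(1) by (simp add: algebra_simps)
    also have "\<dots> \<le> x \<bullet> (Qt B Q r *v x)"
    proof -
      have "c / 4 * (norm x)\<^sup>2 \<le> x \<bullet> (Q_integrand B Q s *v x)" if "s \<in> {0..r}" for s
        using near_0 r that by auto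
      from has_integral_le[OF has_integral_const_real has_integral_quadratic_form[OF Qt_has_integral[of r]] this]
      show ?thesis
        using r by (simp add: content_real)
    qed
    also have "\<dots> \<le> x \<bullet> (Qt B Q t *v x)"
      by (rule inner_Qt_mono[OF psd r(2)])
    finally show "s0 * (c / 4) * t * (norm x)\<^sup>2 \<le> x \<bullet> (Qt B Q t *v x)" .
  qed
qed

end

section \<open>The kernel\<close>

definition KUO_prefactor :: "real^'n^'n \<Rightarrow> real^'n^'n \<Rightarrow> real \<Rightarrow> real" where
  "KUO_prefactor B Q t =
     inverse ((2 * pi) ^ CARD('n)) * inverse (sqrt (det (Qinf B Q) * det (Qt B Q t))) * exp (t * trace B)"

definition KUO_exponent :: "real^'n^'n \<Rightarrow> real^'n^'n \<Rightarrow> real \<Rightarrow> real^'n \<Rightarrow> real" where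
  "KUO_exponent B Q t y = ((matrix_inv (Qt B Q t) - matrix_inv (Qinf B Q)) *v y) \<bullet> y"

lemma KUO_factorization:
  "KUO B Q t x u =
     KUO_prefactor B Q t * exp (- KUO_exponent B Q t (x - Dt B Q t *v u) / 2) * exp (- Rfun B Q x)"
  by (simp add: KUO_def KUO_prefactor_def KUO_exponent_def algebra_simps)

context
  fixes B Q :: "real^'n^'n"
  assumes Q: "sym_pos_def_mat Q"
    and integrable: "Q_integrand B Q integrable_on {0..}"
begin

lemma Q_psd: "0 \<le> v \<bullet> (Q *v v)"
  using Q unfolding sym_pos_def_mat_def by (cases "v = 0") auto

lemma Q_coercive:
  obtains c where "0 < c" "\<And>v. c * (norm v)\<^sup>2 \<le> v \<bullet> (Q *v v)"
proof -
  have "0 < x \<bullet> (Q *v x)" if "x \<noteq> 0" for x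
    using Q that by (simp add: sym_pos_def_mat_def)
  then show ?thesis
    by (rule pos_def_coercive[OF _ that])
qed

lemma Qt_lower_bound:
  obtains c where "0 < c" "\<And>t x. 0 < t \<Longrightarrow> t \<le> 1 \<Longrightarrow> c * t * (norm x)\<^sup>2 \<le> x \<bullet> (Qt B Q t *v x)"
proof -
  obtain c where "0 < c" "\<And>v. c * (norm v)\<^sup>2 \<le> v \<bullet> (Q *v v)"
    using Q_coercive by blast
  then show ?thesis
    by (rule Qt_coercive[OF integrable _ _ that])
qed

lemma Qt_pos_def:
  assumes "0 < t" "t \<le> 1" "x \<noteq> 0"
  shows "0 < x \<bullet> (Qt B Q t *v x)"
proof -
  obtain c where c: "0 < c" "\<And>t x. 0 < t \<Longrightarrow> t \<le> 1 \<Longrightarrow> c * t * (norm x)\<^sup>2 \<le> x \<bullet> (Qt B Q t *v x)"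
    using Qt_lower_bound by blast
  have "0 < c * t * (norm x)\<^sup>2"
    using c(1) assms by simp
  also have "\<dots> \<le> x \<bullet> (Qt B Q t *v x)"
    using c(2) assms by blast
  finally show ?thesis .
qed

lemma Qinf_pos_def: "x \<noteq> 0 \<Longrightarrow> 0 < x \<bullet> (Qinf B Q *v x)"
  using Qt_pos_def[of 1 x] inner_Qt_le_Qinf[OF integrable Q_psd, of x 1] by simp

lemma det_Qt_lower_bound:
  obtains m where "0 < m" "\<And>t. 0 < t \<Longrightarrow> t \<le> 1 \<Longrightarrow> m * t ^ CARD('n) \<le> det (Qt B Q t)"
proof -
  obtain M where "0 < M" and M: "\<And>t. 0 \<le> t \<Longrightarrow> t \<le> 1 \<Longrightarrow> norm (Qt B Q t) \<le> M * t"
    using norm_Qt_le[OF integrable] by blast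
  obtain c where "0 < c" and c: "\<And>t x. 0 < t \<Longrightarrow> t \<le> 1 \<Longrightarrow> c * t * (norm x)\<^sup>2 \<le> x \<bullet> (Qt B Q t *v x)"
    using Qt_lower_bound by blast
  obtain m where "0 < m"
    and m: "\<And>A::real^'n^'n. norm A \<le> M \<Longrightarrow> (\<And>x. c * (norm x)\<^sup>2 \<le> x \<bullet> (A *v x)) \<Longrightarrow> m \<le> det A"
    using det_lower_bound_coercive[OF \<open>0 < c\<close>] by blast
  show ?thesis
  proof (rule that[OF \<open>0 < m\<close>])
    fix t :: real
    assume t: "0 < t" "t \<le> 1"
    define A where "A = (1 / t) *\<^sub>R Qt B Q t"
    have "norm A \<le> M"
      using M[of t] t by (simp add: A_def divide_le_eq mult.commute)
    moreover have "c * (norm x)\<^sup>2 \<le> x \<bullet> (A *v x)" for x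
      using c[OF t, of x] t
      by (simp add: A_def scaleR_matrix_vector_assoc[symmetric] le_divide_eq mult.commute mult.left_commute)
    ultimately have "m \<le> det A"
      by (rule m)
    moreover have "Qt B Q t = t *\<^sub>R A"
      using t by (simp add: A_def)
    ultimately show "m * t ^ CARD('n) \<le> det (Qt B Q t)"
      using t by (simp add: det_scaleR mult.commute)
  qed
qed

lemma KUO_prefactor_le:
  obtains G where "0 < G"
    "\<And>t. 0 < t \<Longrightarrow> t \<le> 1 \<Longrightarrow> KUO_prefactor B Q t \<le> G * sqrt ((1/t) ^ CARD('n))"
proof -
  define dI where "dI = det (Qinf B Q)"
  have "0 < dI"
    unfolding dI_def by (rule pos_def_det_pos[OF Qinf_pos_def])
  obtain m where "0 < m" and m: "\<And>t. 0 < t \<Longrightarrow> t \<le> 1 \<Longrightarrow> m * t ^ CARD('n) \<le> det (Qt B Q t)"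
    using det_Qt_lower_bound by blast
  define c where "c = inverse ((2 * pi) ^ CARD('n))"
  have "0 < c"
    by (simp add: c_def)
  show ?thesis
  proof (rule that[of "c * inverse (sqrt (dI * m)) * exp \<bar>trace B\<bar>"])
    show "0 < c * inverse (sqrt (dI * m)) * exp \<bar>trace B\<bar>"
      using \<open>0 < c\<close> \<open>0 < dI\<close> \<open>0 < m\<close> by simp
    fix t :: real
    assume t: "0 < t" "t \<le> 1"
    have "0 < m * t ^ CARD('n)"
      using \<open>0 < m\<close> t by simp
    then have "inverse (sqrt (dI * det (Qt B Q t))) \<le> inverse (sqrt (dI * (m * t ^ CARD('n))))"
      using m[OF t] \<open>0 < dI\<close> by (intro le_imp_inverse_le) (auto intro: mult_left_mono)
    also have "\<dots> = inverse (sqrt (dI * m)) * sqrt ((1/t) ^ CARD('n))"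
      by (simp add: real_sqrt_mult power_one_over real_sqrt_divide inverse_eq_divide)
    finally have det_part: "inverse (sqrt (dI * det (Qt B Q t))) \<le> inverse (sqrt (dI * m)) * sqrt ((1/t) ^ CARD('n))" .
    have "t * trace B \<le> t * \<bar>trace B\<bar>"
      using t by (intro mult_left_mono) auto
    also have "\<dots> \<le> \<bar>trace B\<bar>"
      using t by (simp add: mult_left_le_one_le)
    finally have exp_part: "exp (t * trace B) \<le> exp \<bar>trace B\<bar>"
      by simp
    have "0 < det (Qt B Q t)"
      using m[OF t] \<open>0 < m * t ^ CARD('n)\<close> by linarith
    have "KUO_prefactor B Q t = c * inverse (sqrt (dI * det (Qt B Q t))) * exp (t * trace B)"
      by (simp add: KUO_prefactor_def c_def dI_def)
    also have "\<dots> \<le> c * (inverse (sqrt (dI * m)) * sqrt ((1/t) ^ CARD('n))) * exp \<bar>trace B\<bar>"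
      using \<open>0 < c\<close> \<open>0 < dI\<close> \<open>0 < m\<close> \<open>0 < det (Qt B Q t)\<close> t
      by (intro mult_mono mult_left_mono det_part exp_part) auto
    finally show "KUO_prefactor B Q t \<le> c * inverse (sqrt (dI * m)) * exp \<bar>trace B\<bar> * sqrt ((1/t) ^ CARD('n))"
      by (simp add: algebra_simps)
  qed
qed

lemma KUO_exponent_lower_bound:
  obtains M Mi where "0 < M" "0 \<le> Mi"
    "\<And>t y. 0 < t \<Longrightarrow> t \<le> 1 \<Longrightarrow> 0 \<le> KUO_exponent B Q t y"
    "\<And>t y. 0 < t \<Longrightarrow> t \<le> 1 \<Longrightarrow> (norm y)\<^sup>2 / (M * t) - Mi * (norm y)\<^sup>2 \<le> KUO_exponent B Q t y"
proof -
  obtain M where "0 < M" and M: "\<And>t. 0 \<le> t \<Longrightarrow> t \<le> 1 \<Longrightarrow> norm (Qt B Q t) \<le> M * t"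
    using norm_Qt_le[OF integrable] by blast
  have Q_sym: "transpose Q = Q"
    using Q by (simp add: sym_pos_def_mat_def)
  have Qinf_inv: "invertible (Qinf B Q)"
    by (rule pos_def_invertible[OF Qinf_pos_def])
  show ?thesis
  proof (rule that[OF \<open>0 < M\<close> norm_ge_zero[of "matrix_inv (Qinf B Q)"]])
    fix t :: real and y :: "real^'n"
    assume t: "0 < t" "t \<le> 1"
    have Qt_inv: "invertible (Qt B Q t)"
      by (rule pos_def_invertible[OF Qt_pos_def[OF t]])
    have Qt_psd: "0 \<le> z \<bullet> (Qt B Q t *v z)" for z
      using Qt_pos_def[OF t, of z] by (cases "z = 0") auto
    have split: "KUO_exponent B Q t y = y \<bullet> (matrix_inv (Qt B Q t) *v y) - y \<bullet> (matrix_inv (Qinf B Q) *v y)"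
      by (simp add: KUO_exponent_def matrix_vector_mult_diff_rdistrib inner_diff_left inner_diff_right
          inner_commute)
    have "y \<bullet> (matrix_inv (Qinf B Q) *v y) \<le> y \<bullet> (matrix_inv (Qt B Q t) *v y)"
      by (rule quadratic_form_matrix_inv_antimono[OF symmetric_Qt[OF integrable Q_sym] Qt_inv Qt_psd Qinf_inv
            inner_Qt_le_Qinf[OF integrable Q_psd]])
    then show "0 \<le> KUO_exponent B Q t y"
      by (simp add: split)
    have "z \<bullet> (Qt B Q t *v z) \<le> M * t * (norm z)\<^sup>2" for z
    proof -
      have "z \<bullet> (Qt B Q t *v z) \<le> norm (Qt B Q t) * (norm z)\<^sup>2"
        by (rule inner_matrix_vector_le)
      also have "\<dots> \<le> M * t * (norm z)\<^sup>2"
        using M[of t] t by (intro mult_right_mono) auto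
      finally show ?thesis .
    qed
    then have "(norm y)\<^sup>2 / (M * t) \<le> y \<bullet> (matrix_inv (Qt B Q t) *v y)"
      using \<open>0 < M\<close> t
      by (intro quadratic_form_matrix_inv_lower_bound[OF symmetric_Qt[OF integrable Q_sym] Qt_inv Qt_psd]) auto
    moreover have "y \<bullet> (matrix_inv (Qinf B Q) *v y) \<le> norm (matrix_inv (Qinf B Q)) * (norm y)\<^sup>2"
      by (rule inner_matrix_vector_le)
    ultimately show "(norm y)\<^sup>2 / (M * t) - norm (matrix_inv (Qinf B Q)) * (norm y)\<^sup>2 \<le> KUO_exponent B Q t y"
      by (simp add: split)
  qed
qed

end

lemma norm_Dt_minus_id_le:
  fixes B Q :: "real^'n^'n"
  assumes inv: "invertible (Qinf B Q)"
  obtains L where "0 \<le> L" "\<And>t u. 0 \<le> t \<Longrightarrow> t \<le> 1 \<Longrightarrow> norm (Dt B Q t *v u - u) \<le> L * t * norm u"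
proof
  let ?Q = "Qinf B Q" and ?K = "norm (mat 1 :: real^'n^'n) * (exp (norm B) - 1)"
  show "0 \<le> norm ?Q * ?K * norm (matrix_inv ?Q)"
    by simp
  fix t :: real and u :: "real^'n"
  assume t: "0 \<le> t" "t \<le> 1"
  define E where "E = mexp ((- t) *\<^sub>R transpose B)"
  define w where "w = matrix_inv ?Q *v u"
  have "(- t) *\<^sub>R transpose B = t *\<^sub>R (- transpose B)"
    by simp
  then have E: "norm (E - mat 1) \<le> ?K * t"
    using norm_mexp_scaleR_minus_id_le[OF t, of "- transpose B"] by (simp add: E_def norm_transpose)
  have u: "u = ?Q *v w"
    unfolding w_def by (rule matrix_vector_mul_matrix_inv[OF inv, symmetric])
  have "Dt B Q t *v u - u = ?Q *v ((E - mat 1) *v w)"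
    by (subst (2) u)
      (simp add: Dt_def E_def w_def matrix_vector_mul_assoc[symmetric] matrix_vector_mult_diff_rdistrib
        matrix_vector_mult_diff_distrib)
  also have "norm \<dots> \<le> norm ?Q * (norm (E - mat 1) * norm w)"
    by (intro order_trans[OF norm_matrix_vector_mult_le] mult_left_mono norm_matrix_vector_mult_le) simp
  also have "\<dots> \<le> norm ?Q * ((?K * t) * (norm (matrix_inv ?Q) * norm u))"
    unfolding w_def using E t by (intro mult_left_mono mult_mono norm_matrix_vector_mult_le) auto
  finally show "norm (Dt B Q t *v u - u) \<le> norm ?Q * ?K * norm (matrix_inv ?Q) * t * norm u"
    by (simp add: algebra_simps)
qed

lemma KUO_bound_integrable:
  fixes B Q :: "real^'n^'n"
  assumes Q: "sym_pos_def_mat Q" and integrable: "Q_integrand B Q integrable_on {0..}"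
  obtains C where "\<And>x u t. 1 / (1 + norm x) < norm (x - u) \<Longrightarrow> 0 < t \<Longrightarrow> t \<le> 1 \<Longrightarrow>
      KUO B Q t x u \<le> C * exp (- Rfun B Q x) * (1 + norm x) ^ CARD('n)"
proof -
  obtain G where "0 < G"
    and P: "\<And>t. 0 < t \<Longrightarrow> t \<le> 1 \<Longrightarrow> KUO_prefactor B Q t \<le> G * sqrt ((1/t) ^ CARD('n))"
    using KUO_prefactor_le[OF Q integrable] by blast
  obtain M Mi where "0 < M" "0 \<le> Mi"
    and q0: "\<And>t y. 0 < t \<Longrightarrow> t \<le> 1 \<Longrightarrow> 0 \<le> KUO_exponent B Q t y"
    and q: "\<And>t y. 0 < t \<Longrightarrow> t \<le> 1 \<Longrightarrow> (norm y)\<^sup>2 / (M * t) - Mi * (norm y)\<^sup>2 \<le> KUO_exponent B Q t y"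
    using KUO_exponent_lower_bound[OF Q integrable] by blast
  obtain L where "0 \<le> L" and L: "\<And>t u. 0 \<le> t \<Longrightarrow> t \<le> 1 \<Longrightarrow> norm (Dt B Q t *v u - u) \<le> L * t * norm u"
    using norm_Dt_minus_id_le[OF pos_def_invertible[OF Qinf_pos_def[OF Q integrable]]] by blast
  obtain C where C: "\<And>t A Y q. 0 < t \<Longrightarrow> t \<le> 1 \<Longrightarrow> 1 \<le> A \<Longrightarrow> 1 / (2 * A) \<le> Y \<or> 1 / t \<le> 4 * L * A\<^sup>2 \<Longrightarrow>
      0 \<le> q \<Longrightarrow> Y\<^sup>2 / (M * t) - Mi * Y\<^sup>2 \<le> q \<Longrightarrow> sqrt ((1/t) ^ CARD('n)) * exp (- q / 2) \<le> C * A ^ CARD('n)"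
    using gaussian_factor_bound[OF \<open>0 < M\<close> \<open>0 \<le> Mi\<close> \<open>0 \<le> L\<close>] by blast
  show ?thesis
  proof (rule that[of "G * C"])
    fix x u :: "real^'n" and t :: real
    assume far: "1 / (1 + norm x) < norm (x - u)" and t: "0 < t" "t \<le> 1"
    define y where "y = x - Dt B Q t *v u"
    have alt: "1 / (2 * (1 + norm x)) \<le> norm y \<or> 1 / t \<le> 4 * L * (1 + norm x)\<^sup>2"
      unfolding y_def by (rule displacement_dichotomy[OF t(1) \<open>0 \<le> L\<close> L[OF _ t(2)] far]) (use t in simp)
    have "sqrt ((1/t) ^ CARD('n)) * exp (- KUO_exponent B Q t y / 2) \<le> C * (1 + norm x) ^ CARD('n)"
      using C[OF t _ alt q0[OF t] q[OF t]] by simp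
    then have "G * sqrt ((1/t) ^ CARD('n)) * exp (- KUO_exponent B Q t y / 2) \<le> G * (C * (1 + norm x) ^ CARD('n))"
      unfolding mult.assoc using \<open>0 < G\<close> by (intro mult_left_mono) auto
    then have "KUO_prefactor B Q t * exp (- KUO_exponent B Q t y / 2) \<le> G * (C * (1 + norm x) ^ CARD('n))"
      using mult_right_mono[OF P[OF t] exp_ge_zero[of "- KUO_exponent B Q t y / 2"]] by linarith
    then show "KUO B Q t x u \<le> G * C * exp (- Rfun B Q x) * (1 + norm x) ^ CARD('n)"
      unfolding KUO_factorization y_def[symmetric]
      by (simp add: mult_right_mono mult.commute mult.left_commute)
  qed
qed

theorem lemma4p2:
  fixes Q B :: "real^'n^'n"
  assumes "sym_pos_def_mat Q"
    and "\<And>z. complex_eigenvalue B z \<Longrightarrow> Re z < 0"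
  shows "\<exists>C. \<forall>x u :: real^'n. \<forall>t :: real.
           norm (x - u) > 1 / (1 + norm x) \<and> 0 < t \<and> t \<le> 1 \<longrightarrow>
           KUO B Q t x u \<le> C * exp (- Rfun B Q x) * (1 + norm x) ^ CARD('n)"
proof (cases "Q_integrand B Q integrable_on {0..}")
  case True
  then obtain C where "\<And>x u t. 1 / (1 + norm x) < norm (x - u) \<Longrightarrow> 0 < t \<Longrightarrow> t \<le> 1 \<Longrightarrow>
      KUO B Q t x u \<le> C * exp (- Rfun B Q x) * (1 + norm x) ^ CARD('n)"
    using KUO_bound_integrable[OF assms(1)] by blast
  then show ?thesis
    by blast
next
  case False
  (* Without integrability Qinf is the junk value 0, and then so is KUO. *)
  then have "Qinf B Q = mat 0"
    by (simp add: Qinf_eq_integral not_integrable_integral vec_eq_iff mat_def)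
  then have "det (Qinf B Q) = 0"
    by (simp only: det_0)
  then have "KUO B Q t x u = 0" for t x u
    by (simp add: KUO_def)
  then show ?thesis
    by (intro exI[of _ 0]) simp
qed

end
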